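(* Let $n\ge1$, let $d\ge1$ be a square-free integer and let $L(\mathbf{X})=\sum_{i,j=1}^n a_{ij}x_{ij}\in\mathbb{Z}[\mathbf{X}]$ be a linear form in the $n^2$ variables $\mathbf{X}=(x_{ij})_{i,j=1}^n$. Write $\gcd(L,d^2)=ef^2$, where $\gcd(L,d^2)$ is the greatest common divisor of $d^2$ and all coefficients $a_{ij}$, and $e,f$ are positive square-free integers with $\gcd(e,f)=1$. Define \[ S_{d^2}(L)=\sum_{\substack{\mathbf{X}\in\mathbb{Z}_{d^2}^{n\times n}\\ \det\mathbf{X}\equiv0 \bmod d^2}}\exp\left(2\pi i\,L(\mathbf{X})/d^2\right). \] Then \[ |S_{d^2}(L)|\le d^{2n^2-(n+3)/2+o(1)}\,e\,f^{(n+3)/2}, \] where $o(1)$ denotes a quantity tending to $0$ as $d\to\infty$, uniformly in $L$ (depending only on $n$).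
   Context: $\mathbb{Z}_{m}$ denotes the residue ring modulo $m$, represented by $\{0,\dots,m-1\}$. *)

theory Defs
  imports Complex_Main "Jordan_Normal_Form.Determinant" "HOL-Computational_Algebra.Squarefree"
begin

definition residue_matrices :: "nat \<Rightarrow> int \<Rightarrow> int mat set" where
  "residue_matrices n m = {X \<in> carrier_mat n n. \<forall>i<n. \<forall>j<n. X $$ (i,j) \<in> {0..<m}}"

definition linform :: "nat \<Rightarrow> int mat \<Rightarrow> int mat \<Rightarrow> int" where
  "linform n A X = (\<Sum>i<n. \<Sum>j<n. A $$ (i,j) * X $$ (i,j))"

definition gcd_form :: "nat \<Rightarrow> int mat \<Rightarrow> int \<Rightarrow> int" where
  "gcd_form n A m = Gcd (insert m {A $$ (i,j) | i j. i < n \<and> j < n})"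

definition S_sum :: "nat \<Rightarrow> nat \<Rightarrow> int mat \<Rightarrow> complex" where
  "S_sum n d A = (\<Sum>X \<in> {X \<in> residue_matrices n (int d ^ 2). det X mod (int d ^ 2) = 0}.
      exp (2 * of_real pi * \<i> * of_int (linform n A X) / of_int (int d ^ 2)))"

end

theory Submission
  imports Defs "HOL-Library.FuncSet" "HOL-Number_Theory.Cong"
begin

text \<open>
  Put \<open>M = d\<^sup>2\<close>, \<open>n = k + 1\<close> and \<open>G = gcd(L, M)\<close>. We show \<open>|S| \<le> (M\<^sup>k G)\<^sup>n\<close>; since
  \<open>G = e f\<^sup>2\<close> with \<open>e f\<close> dividing \<open>d\<close>, this implies the claim with \<open>o(1) = 0\<close>.

  The substitution \<open>X \<mapsto> X V\<close> with \<open>V\<close> unimodular replaces the coefficient matrix \<open>A\<close> of \<open>L\<close>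
  by \<open>A V\<^sup>T\<close>; a column operation of this kind makes the last column \<open>w\<close> of \<open>A\<close> satisfy
  \<open>gcd(w, M) = G\<close>. Now split \<open>X\<close> into its first \<open>k\<close> columns \<open>g\<close> and its last column \<open>a\<close>.
  Then \<open>det X = c(g)\<cdot>a\<close> with the cofactor vector \<open>c(g)\<close>, and \<open>L(X) = \<Phi>(g) + w\<cdot>a\<close>. The sum
  over \<open>a\<close> is a character sum over the group of \<open>a\<close> with \<open>c(g)\<cdot>a \<equiv> 0\<close>; it vanishes unless
  \<open>w\<close> annihilates this group. The columns of \<open>g\<close> lie in the group (a matrix with two equal
  columns is singular), so a nonzero inner sum forces \<open>w\<cdot>g\<^sub>j \<equiv> 0\<close> for all \<open>j < k\<close>, and it
  forces \<open>gcd(c(g), M)\<close> to divide \<open>G\<close>. Counting solutions of linear congruences then bounds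
  each inner sum by \<open>M\<^sup>k G\<close> and the number of admissible \<open>g\<close> by \<open>(M\<^sup>k G)\<^sup>k\<close>.
\<close>

section \<open>Linear congruences on residue vectors\<close>

definition residue_vecs :: "nat \<Rightarrow> int \<Rightarrow> (nat \<Rightarrow> int) set" where
  "residue_vecs n M = (\<Pi>\<^sub>E i\<in>{..<n}. {0..<M})"

definition dot :: "nat \<Rightarrow> (nat \<Rightarrow> int) \<Rightarrow> (nat \<Rightarrow> int) \<Rightarrow> int" where
  "dot n c y = (\<Sum>i<n. c i * y i)"

definition orth_vecs :: "nat \<Rightarrow> int \<Rightarrow> (nat \<Rightarrow> int) \<Rightarrow> (nat \<Rightarrow> int) set" where
  "orth_vecs n M c = {y \<in> residue_vecs n M. M dvd dot n c y}"

lemma finite_residue_vecs [simp]: "finite (residue_vecs n M)"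
  unfolding residue_vecs_def by (simp add: finite_PiE)

lemma residue_vecs_iff:
  "y \<in> residue_vecs n M \<longleftrightarrow> (\<forall>i<n. 0 \<le> y i \<and> y i < M) \<and> (\<forall>i\<ge>n. y i = undefined)"
  by (auto simp: residue_vecs_def PiE_iff extensional_def)

lemma dot_add: "dot n c (\<lambda>i. y i + z i) = dot n c y + dot n c z"
  unfolding dot_def by (simp add: distrib_left sum.distrib)

lemma dot_cong:
  assumes "\<And>i. i < n \<Longrightarrow> [y i = y' i] (mod M)"
  shows "[dot n c y = dot n c y'] (mod M)"
  unfolding dot_def using assms by (intro cong_sum cong_scalar_left) simp

lemma dot_upd_Suc: "dot (Suc n) c (y(n := a)) = dot n c y + c n * a"
  unfolding dot_def by (simp add: lessThan_Suc)

lemma Gcd_insert_pos: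
  fixes M :: int
  assumes "M > 0"
  shows "Gcd (insert M A) > 0"
proof -
  have "Gcd (insert M A) \<noteq> 0"
    using assms by simp
  then show ?thesis
    by (simp add: le_neq_trans)
qed

lemma sum_PiE_insert:
  assumes "x \<notin> S"
  shows "sum h (PiE (insert x S) T) = (\<Sum>a\<in>T x. \<Sum>g\<in>PiE S T. h (g(x := a)))"
proof -
  have "sum h (PiE (insert x S) T) = sum h ((\<lambda>(y, g). g(x := y)) ` (T x \<times> PiE S T))"
    by (simp add: PiE_insert_eq)
  also have "\<dots> = sum (h \<circ> (\<lambda>(y, g). g(x := y))) (T x \<times> PiE S T)"
    by (rule sum.reindex[OF inj_combinator[OF assms]])
  also have "\<dots> = (\<Sum>a\<in>T x. \<Sum>g\<in>PiE S T. h (g(x := a)))"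
    by (simp add: sum.cartesian_product split_def)
  finally show ?thesis .
qed

lemma sum_residue_vecs_Suc:
  "sum h (residue_vecs (Suc n) M) = (\<Sum>a\<in>{0..<M}. \<Sum>y\<in>residue_vecs n M. h (y(n := a)))"
  unfolding residue_vecs_def lessThan_Suc by (rule sum_PiE_insert) simp

lemma card_residue_vecs_Suc:
  "card {y \<in> residue_vecs (Suc n) M. P y} = (\<Sum>a\<in>{0..<M}. card {y \<in> residue_vecs n M. P (y(n := a))})"
proof -
  have "card {y \<in> residue_vecs (Suc n) M. P y} = (\<Sum>y\<in>residue_vecs (Suc n) M. if P y then 1 else 0)"
    by (simp add: sum.If_cases Int_def)
  also have "\<dots> = (\<Sum>a\<in>{0..<M}. \<Sum>y\<in>residue_vecs n M. if P (y(n := a)) then 1 else 0)"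
    by (rule sum_residue_vecs_Suc)
  also have "\<dots> = (\<Sum>a\<in>{0..<M}. card {y \<in> residue_vecs n M. P (y(n := a))})"
    by (simp add: sum.If_cases Int_def)
  finally show ?thesis .
qed

lemma card_residue_class:
  fixes M m b :: int
  assumes M: "M > 0" and m: "m > 0" and mM: "m dvd M"
  shows "int (card {a \<in> {0..<M}. [a = b] (mod m)}) * m \<le> M"
proof -
  have "{a \<in> {0..<M}. [a = b] (mod m)} \<subseteq> (\<lambda>q. q * m + b mod m) ` {0..<M div m}"
  proof
    fix a assume a: "a \<in> {a \<in> {0..<M}. [a = b] (mod m)}"
    then have "a = a div m * m + b mod m"
      by (metis (mono_tags) cong_def div_mult_mod_eq mem_Collect_eq)
    moreover have "a div m \<in> {0..<M div m}"
    proof -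
      have "a div m * m \<le> a"
        using m by (simp add: minus_mod_eq_div_mult [symmetric])
      also have "a < M div m * m"
        using a mM by simp
      finally show ?thesis
        using a m by (simp add: pos_imp_zdiv_nonneg_iff)
    qed
    ultimately show "a \<in> (\<lambda>q. q * m + b mod m) ` {0..<M div m}"
      by blast
  qed
  then have "card {a \<in> {0..<M}. [a = b] (mod m)} \<le> card {0..<M div m}"
    by (meson card_image_le card_mono finite_atLeastLessThan_int finite_imageI order_trans)
  then have "int (card {a \<in> {0..<M}. [a = b] (mod m)}) \<le> M div m"
    using M m by (simp add: le_nat_iff pos_imp_zdiv_nonneg_iff)
  then have "int (card {a \<in> {0..<M}. [a = b] (mod m)}) * m \<le> M div m * m"
    using m by (simp add: mult_right_mono)
  then show ?thesis
    using mM by simp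
qed

lemma cong_mult_imp_cong_div_gcd:
  fixes c m :: int
  assumes m: "m > 0" and cong: "[c * a = c * b] (mod m)"
  shows "[a = b] (mod m div gcd c m)"
proof -
  define h where "h = gcd c m"
  define m' where "m' = m div h"
  have h: "h > 0"
    using m by (simp add: h_def)
  have "m dvd c * (a - b)"
    using cong by (simp add: cong_iff_dvd_diff right_diff_distrib)
  moreover have "c * (a - b) = (c div h * (a - b)) * h" and "m = m' * h"
    by (simp_all add: h_def m'_def)
  ultimately have "m' dvd c div h * (a - b)"
    using h by simp
  moreover have "coprime (c div h) m'"
    using div_gcd_coprime[of c m] m by (simp add: h_def m'_def)
  ultimately show ?thesis
    by (simp add: cong_iff_dvd_diff coprime_commute coprime_dvd_mult_right_iff m'_def h_def)
qed

lemma card_linear_cong_scalar: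
  fixes M m c r :: int
  assumes M: "M > 0" and m: "m > 0" and mM: "m dvd M"
  shows "int (card {a \<in> {0..<M}. [c * a = r] (mod m)}) * m \<le> M * gcd c m"
proof (cases "{a \<in> {0..<M}. [c * a = r] (mod m)} = {}")
  case True
  show ?thesis
    unfolding True using M by simp
next
  case False
  then obtain a0 where a0: "[c * a0 = r] (mod m)"
    by blast
  define h where "h = gcd c m"
  define m' where "m' = m div h"
  have h: "h > 0"
    using m by (simp add: h_def)
  have mh: "m = m' * h"
    by (simp add: m'_def h_def)
  have m': "m' > 0"
    using m h mh by (simp add: zero_less_mult_iff)
  have "{a \<in> {0..<M}. [c * a = r] (mod m)} \<subseteq> {a \<in> {0..<M}. [a = a0] (mod m')}"
    using a0 cong_mult_imp_cong_div_gcd[OF m] cong_sym cong_trans unfolding m'_def h_def by blast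
  moreover have "finite {a \<in> {0..<M}. [a = a0] (mod m')}"
    by (rule finite_subset[of _ "{0..<M}"]) auto
  ultimately have "card {a \<in> {0..<M}. [c * a = r] (mod m)} \<le> card {a \<in> {0..<M}. [a = a0] (mod m')}"
    by (simp only: card_mono)
  then have "int (card {a \<in> {0..<M}. [c * a = r] (mod m)}) * m'
      \<le> int (card {a \<in> {0..<M}. [a = a0] (mod m')}) * m'"
    using m' by (simp add: mult_right_mono)
  also have "\<dots> \<le> M"
    using card_residue_class[OF M m'] mM mh by (simp add: dvd_mult_left)
  finally have "int (card {a \<in> {0..<M}. [c * a = r] (mod m)}) * m' * h \<le> M * h"
    using h by simp
  then show ?thesis
    by (metis h_def mh mult.assoc)
qed

lemma Gcd_dvd_of_dot_cong:
  assumes "[dot n c y = s] (mod m)"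
  shows "Gcd (insert m (c ` {..<n})) dvd s"
proof -
  have "Gcd (insert m (c ` {..<n})) dvd dot n c y"
    unfolding dot_def by (intro dvd_sum dvd_mult2 Gcd_dvd) simp
  moreover have "[dot n c y = s] (mod Gcd (insert m (c ` {..<n})))"
    using assms by (rule cong_dvd_modulus) (simp add: Gcd_dvd)
  ultimately show ?thesis
    using cong_dvd_iff by blast
qed

lemma card_linear_cong:
  fixes M m r :: int
  assumes M: "M > 0" and m: "m > 0" and mM: "m dvd M"
  shows "int (card {y \<in> residue_vecs n M. [dot n c y = r] (mod m)}) * m
           \<le> M ^ n * Gcd (insert m (c ` {..<n}))"
proof (induction n arbitrary: r)
  case 0
  have "card {y \<in> residue_vecs 0 M. [dot 0 c y = r] (mod m)} \<le> card (residue_vecs 0 M)"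
    by (simp add: card_mono)
  also have "\<dots> = 1"
    by (simp add: residue_vecs_def)
  finally show ?case
    using m by simp
next
  case (Suc n)
  define g where "g = Gcd (insert m (c ` {..<n}))"
  have g: "g > 0"
    using Gcd_insert_pos[OF m] by (simp add: g_def)
  have g_dvd_m: "g dvd m"
    unfolding g_def by (rule Gcd_dvd) simp
  define F where "F a = {y \<in> residue_vecs n M. [dot n c y = r - c n * a] (mod m)}" for a
  have split: "card {y \<in> residue_vecs (Suc n) M. [dot (Suc n) c y = r] (mod m)}
      = (\<Sum>a\<in>{0..<M}. card (F a))"
    unfolding F_def card_residue_vecs_Suc dot_upd_Suc
    by (simp add: cong_iff_dvd_diff algebra_simps)
  have fiber: "int (card (F a)) * m \<le> (if [c n * a = r] (mod g) then M ^ n * g else 0)" for a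
  proof (cases "[c n * a = r] (mod g)")
    case True
    then show ?thesis
      using Suc.IH[of "r - c n * a"] by (simp add: F_def g_def)
  next
    case False
    then have "\<not> g dvd r - c n * a"
      by (simp add: cong_iff_dvd_diff dvd_diff_commute)
    then have "F a = {}"
      unfolding F_def g_def using Gcd_dvd_of_dot_cong by blast
    then show ?thesis
      using False by simp
  qed
  have "int (card {y \<in> residue_vecs (Suc n) M. [dot (Suc n) c y = r] (mod m)}) * m
        = (\<Sum>a\<in>{0..<M}. int (card (F a)) * m)"
    by (simp add: split sum_distrib_right)
  also have "\<dots> \<le> (\<Sum>a\<in>{0..<M}. if [c n * a = r] (mod g) then M ^ n * g else 0)"
    by (rule sum_mono) (rule fiber)
  also have "\<dots> = M ^ n * (int (card {a \<in> {0..<M}. [c n * a = r] (mod g)}) * g)"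
    by (simp add: sum.If_cases Int_def)
  also have "\<dots> \<le> M ^ n * (M * gcd (c n) g)"
    using card_linear_cong_scalar[OF M g dvd_trans[OF g_dvd_m mM]] M by (simp add: mult_left_mono)
  also have "\<dots> = M ^ Suc n * Gcd (insert m (c ` {..<Suc n}))"
    by (simp add: g_def lessThan_Suc gcd.left_commute)
  finally show ?case .
qed

lemma card_orth_vecs:
  assumes M: "M > 0"
  shows "int (card (orth_vecs (Suc k) M c)) \<le> M ^ k * Gcd (insert M (c ` {..<Suc k}))"
proof -
  have "orth_vecs (Suc k) M c = {y \<in> residue_vecs (Suc k) M. [dot (Suc k) c y = 0] (mod M)}"
    by (simp add: orth_vecs_def cong_0_iff)
  then have "int (card (orth_vecs (Suc k) M c)) * M \<le> (M ^ k * Gcd (insert M (c ` {..<Suc k}))) * M"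
    using card_linear_cong[OF M M dvd_refl, of "Suc k" c 0] by (simp add: ac_simps)
  then show ?thesis
    using M by simp
qed

section \<open>Additive characters\<close>

definition add_char :: "int \<Rightarrow> int \<Rightarrow> complex" where
  "add_char M k = exp (2 * of_real pi * \<i> * of_int k / of_int M)"

lemma add_char_add: "add_char M (a + b) = add_char M a * add_char M b"
  unfolding add_char_def by (simp add: add_divide_distrib distrib_left exp_add)

lemma add_char_cis: "add_char M k = cis (2 * pi * k / M)"
proof -
  have "2 * of_real pi * \<i> * of_int k / of_int M = \<i> * complex_of_real (2 * pi * k / M)"
    by simp
  then show ?thesis
    unfolding add_char_def cis_conv_exp by (simp add: ac_simps)
qed

lemma norm_add_char [simp]: "norm (add_char M k) = 1"
  by (simp add: add_char_cis)

lemma add_char_multiple: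
  assumes "M \<noteq> 0"
  shows "add_char M (q * M) = 1"
proof -
  have "2 * pi * real_of_int (q * M) / real_of_int M = 2 * pi * real_of_int q"
    using assms by simp
  then show ?thesis
    by (simp add: add_char_cis)
qed

lemma add_char_cong:
  assumes "M \<noteq> 0" and "[a = b] (mod M)"
  shows "add_char M a = add_char M b"
proof -
  have "[b = a] (mod M)"
    using assms(2) by (rule cong_sym)
  then obtain q where "a = b + q * M"
    by (auto simp: cong_iff_lin mult.commute)
  then show ?thesis
    using assms(1) by (simp add: add_char_add add_char_multiple)
qed

lemma add_char_eq_1_imp_dvd:
  assumes M: "M > 0" and e: "add_char M k = 1"
  shows "M dvd k"
proof -
  have "cos (2 * pi * k / M) = 1"
    using arg_cong[OF e, of Re] by (simp add: add_char_cis)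
  then obtain q :: int where "2 * pi * k / M = q * 2 * pi"
    unfolding cos_one_2pi_int by auto
  then have "real_of_int k = real_of_int (q * M)"
    using M pi_gt_zero by (simp add: field_simps)
  then have "k = q * M"
    by linarith
  then show ?thesis
    by simp
qed

lemma sum_residue_vecs_translate:
  fixes h :: "(nat \<Rightarrow> int) \<Rightarrow> 'a :: comm_monoid_add"
  assumes M: "M > 0"
    and periodic: "\<And>y y'. (\<And>i. i < n \<Longrightarrow> [y i = y' i] (mod M)) \<Longrightarrow> h y = h y'"
  shows "(\<Sum>y\<in>residue_vecs n M. h (\<lambda>i. y i + z i)) = (\<Sum>y\<in>residue_vecs n M. h y)"
proof -
  define \<phi> where "\<phi> y = (\<lambda>i. if i < n then (y i + z i) mod M else undefined)" for y
  have into: "\<phi> ` residue_vecs n M \<subseteq> residue_vecs n M"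
    using M by (auto simp: \<phi>_def residue_vecs_iff)
  have "inj_on \<phi> (residue_vecs n M)"
  proof (rule inj_onI)
    fix y y' assume y: "y \<in> residue_vecs n M" and y': "y' \<in> residue_vecs n M" and eq: "\<phi> y = \<phi> y'"
    show "y = y'"
    proof
      fix i
      show "y i = y' i"
      proof (cases "i < n")
        case True
        then have "[y i + z i = y' i + z i] (mod M)"
          using fun_cong[OF eq, of i] by (simp add: \<phi>_def cong_def)
        then have "[y i = y' i] (mod M)"
          by (simp add: cong_add_rcancel)
        then show ?thesis
          using True y y' by (simp add: residue_vecs_iff cong_def)
      next
        case False
        then show ?thesis
          using y y' by (simp add: residue_vecs_iff)
      qed
    qed
  qed
  then have "bij_betw \<phi> (residue_vecs n M) (residue_vecs n M)"
    using into by (simp add: bij_betw_def endo_inj_surj)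
  then have "(\<Sum>y\<in>residue_vecs n M. h y) = (\<Sum>y\<in>residue_vecs n M. h (\<phi> y))"
    by (rule sum.reindex_bij_betw [symmetric])
  also have "\<dots> = (\<Sum>y\<in>residue_vecs n M. h (\<lambda>i. y i + z i))"
    by (intro sum.cong refl periodic) (simp add: \<phi>_def cong_def)
  finally show ?thesis ..
qed

lemma char_sum_orth_vecs_nonzero_imp_dvd:
  assumes M: "M > 0" and z: "z \<in> orth_vecs n M c"
    and nonzero: "(\<Sum>y\<in>orth_vecs n M c. add_char M (dot n w y)) \<noteq> 0"
  shows "M dvd dot n w z"
proof -
  define h where "h y = (if M dvd dot n c y then add_char M (dot n w y) else 0)" for y
  have sum_h: "(\<Sum>y\<in>orth_vecs n M c. add_char M (dot n w y)) = (\<Sum>y\<in>residue_vecs n M. h y)"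
    unfolding orth_vecs_def h_def by (rule sum.inter_filter) simp
  have periodic: "h y = h y'" if "\<And>i. i < n \<Longrightarrow> [y i = y' i] (mod M)" for y y'
  proof -
    have "[dot n c y = dot n c y'] (mod M)" "[dot n w y = dot n w y'] (mod M)"
      using that by (simp_all add: dot_cong)
    then show ?thesis
      using M by (simp add: h_def cong_dvd_iff add_char_cong)
  qed
  have "M dvd dot n c z"
    using z by (simp add: orth_vecs_def)
  then have "h (\<lambda>i. y i + z i) = add_char M (dot n w z) * h y" for y
    by (simp add: h_def dot_add add_char_add dvd_add_left_iff)
  then have "(\<Sum>y\<in>residue_vecs n M. h y) = add_char M (dot n w z) * (\<Sum>y\<in>residue_vecs n M. h y)"
    using sum_residue_vecs_translate[where h = h and n = n and z = z, OF M periodic] by (simp add: sum_distrib_left)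
  then have "add_char M (dot n w z) = 1"
    using nonzero sum_h by simp
  then show ?thesis
    by (rule add_char_eq_1_imp_dvd[OF M])
qed

lemma dot_restrict_delta:
  assumes "i < n"
  shows "dot n v (restrict (\<lambda>l. if l = i then x else 0) {..<n}) = v i * x"
proof -
  have "dot n v (restrict (\<lambda>l. if l = i then x else 0) {..<n}) = (\<Sum>l<n. if l = i then v i * x else 0)"
    unfolding dot_def by (rule sum.cong) auto
  then show ?thesis
    using assms by simp
qed

lemma char_sum_nonzero_imp_dvd_coord:
  assumes M: "M > 0" and i: "i < n"
    and nonzero: "(\<Sum>y\<in>orth_vecs n M c. add_char M (dot n w y)) \<noteq> 0"
    and dvd: "M dvd c i * x"
  shows "M dvd w i * x"
proof -
  define z where "z = restrict (\<lambda>l. if l = i then x mod M else 0) {..<n}"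
  have "z \<in> residue_vecs n M"
    using M by (simp add: z_def residue_vecs_def)
  moreover have "M dvd dot n c z"
    using dvd by (simp add: z_def dot_restrict_delta[OF i] mod_eq_0_iff_dvd [symmetric] mod_mult_right_eq)
  ultimately have "z \<in> orth_vecs n M c"
    by (simp add: orth_vecs_def)
  then have "M dvd dot n w z"
    by (rule char_sum_orth_vecs_nonzero_imp_dvd[OF M _ nonzero])
  then show ?thesis
    by (simp add: z_def dot_restrict_delta[OF i] mod_eq_0_iff_dvd [symmetric] mod_mult_right_eq)
qed

lemma Gcd_dvd_Gcd_if_char_sum_nonzero:
  assumes M: "M > 0"
    and nonzero: "(\<Sum>y\<in>orth_vecs n M c. add_char M (dot n w y)) \<noteq> 0"
  shows "Gcd (insert M (c ` {..<n})) dvd Gcd (insert M (w ` {..<n}))"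
proof -
  define G where "G = Gcd (insert M (c ` {..<n}))"
  define r where "r = M div G"
  have G: "G > 0"
    using Gcd_insert_pos[OF M] by (simp add: G_def)
  have Mr: "M = G * r"
    unfolding r_def G_def by (simp add: Gcd_dvd)
  have r: "r > 0"
    using M G Mr by (simp add: zero_less_mult_iff)
  have "G dvd w i" if i: "i < n" for i
  proof -
    have "G dvd c i"
      unfolding G_def by (rule Gcd_dvd) (use i in simp)
    then have "M dvd c i * r"
      by (simp add: Mr)
    then have "G * r dvd w i * r"
      using char_sum_nonzero_imp_dvd_coord[OF M i nonzero] by (simp add: Mr [symmetric])
    then show ?thesis
      using r by simp
  qed
  then show ?thesis
    unfolding G_def by (intro Gcd_greatest) (auto simp: Gcd_dvd)
qed

lemma norm_char_sum_orth_vecs_le: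
  assumes M: "M > 0"
  shows "norm (\<Sum>y\<in>orth_vecs (Suc k) M c. add_char M (dot (Suc k) w y))
           \<le> of_int (M ^ k * Gcd (insert M (w ` {..<Suc k})))"
proof (cases "(\<Sum>y\<in>orth_vecs (Suc k) M c. add_char M (dot (Suc k) w y)) = 0")
  case True
  then show ?thesis
    using M by simp
next
  case False
  have "norm (\<Sum>y\<in>orth_vecs (Suc k) M c. add_char M (dot (Suc k) w y))
      \<le> (\<Sum>y\<in>orth_vecs (Suc k) M c. norm (add_char M (dot (Suc k) w y)))"
    by (rule norm_sum)
  also have "\<dots> = of_int (int (card (orth_vecs (Suc k) M c)))"
    by simp
  also have "\<dots> \<le> of_int (M ^ k * Gcd (insert M (c ` {..<Suc k})))"
    using card_orth_vecs[OF M] by (simp only: of_int_le_iff)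
  also have "\<dots> \<le> of_int (M ^ k * Gcd (insert M (w ` {..<Suc k})))"
    using Gcd_dvd_Gcd_if_char_sum_nonzero[OF M False] Gcd_insert_pos[OF M] M
    by (simp add: zdvd_imp_le)
  finally show ?thesis .
qed

section \<open>Matrices given by their columns\<close>

definition cols_mat :: "nat \<Rightarrow> (nat \<Rightarrow> nat \<Rightarrow> 'a) \<Rightarrow> 'a mat" where
  "cols_mat n f = mat n n (\<lambda>(i, j). f j i)"

lemma cols_mat_carrier [simp]: "cols_mat n f \<in> carrier_mat n n"
  by (simp add: cols_mat_def)

lemma dim_cols_mat [simp]: "dim_row (cols_mat n f) = n" "dim_col (cols_mat n f) = n"
  by (simp_all add: cols_mat_def)

lemma index_cols_mat [simp]: "i < n \<Longrightarrow> j < n \<Longrightarrow> cols_mat n f $$ (i, j) = f j i"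
  by (simp add: cols_mat_def)

lemma inj_on_cols_mat: "inj_on (cols_mat n) (\<Pi>\<^sub>E j\<in>{..<n}. residue_vecs n M)"
proof (rule inj_onI)
  fix f g
  assume f: "f \<in> (\<Pi>\<^sub>E j\<in>{..<n}. residue_vecs n M)" and g: "g \<in> (\<Pi>\<^sub>E j\<in>{..<n}. residue_vecs n M)"
    and eq: "cols_mat n f = cols_mat n g"
  show "f = g"
  proof (rule PiE_ext[OF f g])
    fix j assume j: "j \<in> {..<n}"
    have "f j \<in> residue_vecs n M" "g j \<in> residue_vecs n M"
      using f g j by auto
    then show "f j = g j"
      unfolding residue_vecs_def
    proof (rule PiE_ext)
      fix i assume "i \<in> {..<n}"
      then show "f j i = g j i"
        using arg_cong[OF eq, of "\<lambda>X. X $$ (i, j)"] j by simp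
    qed
  qed
qed

lemma cols_mat_image: "cols_mat n ` (\<Pi>\<^sub>E j\<in>{..<n}. residue_vecs n M) = residue_matrices n M"
proof (intro equalityI subsetI)
  fix X assume "X \<in> cols_mat n ` (\<Pi>\<^sub>E j\<in>{..<n}. residue_vecs n M)"
  then obtain f where f: "f \<in> (\<Pi>\<^sub>E j\<in>{..<n}. residue_vecs n M)" and X: "X = cols_mat n f"
    by blast
  have "f j i \<in> {0..<M}" if "i < n" "j < n" for i j
    using PiE_mem[OF PiE_mem[OF f, of j, unfolded residue_vecs_def], of i] that by simp
  then show "X \<in> residue_matrices n M"
    by (simp add: X residue_matrices_def)
next
  fix X assume X: "X \<in> residue_matrices n M"
  define f where "f = (\<lambda>j\<in>{..<n}. \<lambda>i\<in>{..<n}. X $$ (i, j))"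
  have "f \<in> (\<Pi>\<^sub>E j\<in>{..<n}. residue_vecs n M)"
    using X by (simp add: f_def residue_vecs_def residue_matrices_def)
  moreover have "dim_row X = n" "dim_col X = n"
    using X unfolding residue_matrices_def carrier_mat_def by simp_all
  then have "cols_mat n f = X"
    by (intro eq_matI) (simp_all add: f_def)
  ultimately show "X \<in> cols_mat n ` (\<Pi>\<^sub>E j\<in>{..<n}. residue_vecs n M)"
    by blast
qed

lemma bij_betw_cols_mat:
  "bij_betw (cols_mat n) (\<Pi>\<^sub>E j\<in>{..<n}. residue_vecs n M) (residue_matrices n M)"
  by (rule bij_betw_imageI[OF inj_on_cols_mat cols_mat_image])

lemma sum_residue_matrices_Suc:
  "(\<Sum>X\<in>residue_matrices (Suc k) M. F X)
     = (\<Sum>g\<in>(\<Pi>\<^sub>E j\<in>{..<k}. residue_vecs (Suc k) M).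
          \<Sum>a\<in>residue_vecs (Suc k) M. F (cols_mat (Suc k) (g(k := a))))"
proof -
  have "(\<Sum>X\<in>residue_matrices (Suc k) M. F X)
      = (\<Sum>f\<in>(\<Pi>\<^sub>E j\<in>{..<Suc k}. residue_vecs (Suc k) M). F (cols_mat (Suc k) f))"
    by (rule sum.reindex_bij_betw [OF bij_betw_cols_mat, symmetric])
  also have "\<dots> = (\<Sum>a\<in>residue_vecs (Suc k) M. \<Sum>g\<in>(\<Pi>\<^sub>E j\<in>{..<k}. residue_vecs (Suc k) M).
                      F (cols_mat (Suc k) (g(k := a))))"
    unfolding lessThan_Suc by (rule sum_PiE_insert) simp
  also have "\<dots> = (\<Sum>g\<in>(\<Pi>\<^sub>E j\<in>{..<k}. residue_vecs (Suc k) M).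
                      \<Sum>a\<in>residue_vecs (Suc k) M. F (cols_mat (Suc k) (g(k := a))))"
    by (rule sum.swap)
  finally show ?thesis .
qed

definition last_cofactors :: "nat \<Rightarrow> (nat \<Rightarrow> nat \<Rightarrow> int) \<Rightarrow> nat \<Rightarrow> int" where
  "last_cofactors k g i = cofactor (cols_mat (Suc k) (g(k := (\<lambda>_. 0)))) i k"

lemma cofactor_cols_mat_last:
  "cofactor (cols_mat (Suc k) (g(k := a))) i k = last_cofactors k g i"
proof -
  have "mat_delete (cols_mat (Suc k) (g(k := a))) i k
      = mat_delete (cols_mat (Suc k) (g(k := (\<lambda>_. 0)))) i k"
  proof (rule eq_matI)
    fix i' j'
    assume "i' < dim_row (mat_delete (cols_mat (Suc k) (g(k := (\<lambda>_. 0)))) i k)"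
      and "j' < dim_col (mat_delete (cols_mat (Suc k) (g(k := (\<lambda>_. 0)))) i k)"
    then have "i' < k" "j' < k"
      by simp_all
    then show "mat_delete (cols_mat (Suc k) (g(k := a))) i k $$ (i', j')
        = mat_delete (cols_mat (Suc k) (g(k := (\<lambda>_. 0)))) i k $$ (i', j')"
      by (simp add: mat_delete_def)
  qed simp_all
  then show ?thesis
    by (simp add: last_cofactors_def cofactor_def)
qed

lemma det_cols_mat_last:
  "det (cols_mat (Suc k) (g(k := a))) = dot (Suc k) (last_cofactors k g) a"
  unfolding dot_def
  by (subst laplace_expansion_column[of _ "Suc k" k])
     (simp_all add: cofactor_cols_mat_last mult.commute)

lemma last_cofactors_orth:
  assumes j: "j < k"
  shows "dot (Suc k) (last_cofactors k g) (g j) = 0"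
proof -
  have "det (cols_mat (Suc k) (g(k := g j))) = 0"
  proof (rule det_identical_columns[of _ "Suc k" j k])
    show "col (cols_mat (Suc k) (g(k := g j))) j = col (cols_mat (Suc k) (g(k := g j))) k"
      using j by (intro eq_vecI) simp_all
  qed (use j in simp_all)
  then show ?thesis
    by (simp add: det_cols_mat_last)
qed

section \<open>Invariance under unimodular substitutions\<close>

definition exp_sum :: "nat \<Rightarrow> int \<Rightarrow> int mat \<Rightarrow> complex" where
  "exp_sum n M A = (\<Sum>X\<in>{X \<in> residue_matrices n M. det X mod M = 0}. add_char M (linform n A X))"

lemma S_sum_eq_exp_sum: "S_sum n d A = exp_sum n (int d ^ 2) A"
  by (simp add: S_sum_def exp_sum_def add_char_def)

lemma finite_residue_matrices: "finite (residue_matrices n M)"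
  using bij_betw_finite[OF bij_betw_cols_mat] by (simp add: finite_PiE)

lemma exp_sum_altdef:
  "exp_sum n M A = (\<Sum>X\<in>residue_matrices n M. if M dvd det X then add_char M (linform n A X) else 0)"
  unfolding exp_sum_def by (simp add: sum.inter_filter finite_residue_matrices dvd_eq_mod_eq_0)

definition mat_mod :: "int \<Rightarrow> int mat \<Rightarrow> int mat" where
  "mat_mod M X = map_mat (\<lambda>x. x mod M) X"

lemma residue_matrices_carrier: "X \<in> residue_matrices n M \<Longrightarrow> X \<in> carrier_mat n n"
  by (simp add: residue_matrices_def)

lemma mat_mod_in_residue_matrices:
  "M > 0 \<Longrightarrow> X \<in> carrier_mat n n \<Longrightarrow> mat_mod M X \<in> residue_matrices n M"
  unfolding residue_matrices_def mat_mod_def by simp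

lemma mat_mod_mult_left:
  assumes "X \<in> carrier_mat n m" and "Y \<in> carrier_mat m p"
  shows "mat_mod M (mat_mod M X * Y) = mat_mod M (X * Y)"
proof (rule eq_matI)
  fix i j assume "i < dim_row (mat_mod M (X * Y))" "j < dim_col (mat_mod M (X * Y))"
  then have ij: "i < n" "j < p"
    using assms by (simp_all add: mat_mod_def)
  have "[(\<Sum>l\<in>{0..<m}. X $$ (i, l) mod M * Y $$ (l, j)) = (\<Sum>l\<in>{0..<m}. X $$ (i, l) * Y $$ (l, j))] (mod M)"
    by (intro cong_sum cong_scalar_right) (simp add: cong_def)
  then show "mat_mod M (mat_mod M X * Y) $$ (i, j) = mat_mod M (X * Y) $$ (i, j)"
    using assms ij by (simp add: mat_mod_def scalar_prod_def cong_def)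
qed (use assms in \<open>simp_all add: mat_mod_def\<close>)

lemma det_mat_mod:
  assumes X: "X \<in> carrier_mat n n"
  shows "det (mat_mod M X) mod M = det X mod M"
proof -
  have Xm: "mat_mod M X \<in> carrier_mat n n"
    using X by (simp add: mat_mod_def)
  have "[det (mat_mod M X) = det X] (mod M)"
    unfolding det_def'[OF X] det_def'[OF Xm]
  proof (intro cong_sum cong_scalar_left cong_prod)
    fix p i assume "p \<in> {p. p permutes {0..<n}}" and "i \<in> {0..<n}"
    then have "i < n" "p i < n"
      using permutes_in_image[of p "{0..<n}" i] by auto
    then show "[mat_mod M X $$ (i, p i) = X $$ (i, p i)] (mod M)"
      using X by (simp add: mat_mod_def cong_def)
  qed
  then show ?thesis
    by (simp add: cong_def)
qed

lemma linform_mat_mod: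
  assumes "X \<in> carrier_mat n n"
  shows "[linform n A (mat_mod M X) = linform n A X] (mod M)"
  unfolding linform_def using assms
  by (intro cong_sum cong_scalar_left) (simp add: mat_mod_def cong_def)

lemma linform_mult:
  assumes A: "A \<in> carrier_mat n n" and X: "X \<in> carrier_mat n n" and V: "V \<in> carrier_mat n n"
  shows "linform n A (X * V) = linform n (A * V\<^sup>T) X"
proof -
  have "linform n A (X * V) = (\<Sum>i<n. \<Sum>j<n. \<Sum>l<n. A $$ (i, j) * (X $$ (i, l) * V $$ (l, j)))"
    using X V by (simp add: linform_def scalar_prod_def atLeast0LessThan sum_distrib_left)
  also have "\<dots> = (\<Sum>i<n. \<Sum>l<n. \<Sum>j<n. A $$ (i, j) * (X $$ (i, l) * V $$ (l, j)))"
    by (intro sum.cong refl sum.swap)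
  also have "\<dots> = linform n (A * V\<^sup>T) X"
    using A V by (simp add: linform_def scalar_prod_def atLeast0LessThan sum_distrib_left ac_simps)
  finally show ?thesis .
qed

lemma inj_on_mat_mod_mult:
  assumes M: "M > 0" and V: "V \<in> carrier_mat n n" and cop: "coprime (det V) M"
  shows "inj_on (\<lambda>X. mat_mod M (X * V)) (residue_matrices n M)"
proof (rule inj_onI)
  fix X Y assume X: "X \<in> residue_matrices n M" and Y: "Y \<in> residue_matrices n M"
    and eq: "mat_mod M (X * V) = mat_mod M (Y * V)"
  have Xc: "X \<in> carrier_mat n n" and Yc: "Y \<in> carrier_mat n n"
    using X Y by (simp_all add: residue_matrices_def)
  have undo: "mat_mod M (mat_mod M (Z * V) * adj_mat V) = mat_mod M (det V \<cdot>\<^sub>m Z)"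
    if Z: "Z \<in> carrier_mat n n" for Z
  proof -
    have "Z * V * adj_mat V = Z * (V * adj_mat V)"
      using Z V adj_mat(1)[OF V] by (simp add: assoc_mult_mat)
    also have "\<dots> = det V \<cdot>\<^sub>m Z"
      using Z V by (simp add: adj_mat(2)[OF V] mult_smult_distrib[OF Z one_carrier_mat] right_mult_one_mat)
    finally show ?thesis
      using Z V adj_mat(1)[OF V] by (simp add: mat_mod_mult_left[of _ n n _ n])
  qed
  have scaled: "mat_mod M (det V \<cdot>\<^sub>m X) = mat_mod M (det V \<cdot>\<^sub>m Y)"
    using undo[OF Xc] undo[OF Yc] eq by simp
  have "[det V * X $$ (i, j) = det V * Y $$ (i, j)] (mod M)" if "i < n" "j < n" for i j
  proof -
    have "mat_mod M (det V \<cdot>\<^sub>m X) $$ (i, j) = mat_mod M (det V \<cdot>\<^sub>m Y) $$ (i, j)"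
      by (simp only: scaled)
    then show ?thesis
      using that Xc Yc by (simp add: mat_mod_def cong_def)
  qed
  then have "[X $$ (i, j) = Y $$ (i, j)] (mod M)" if "i < n" "j < n" for i j
    using that cop by (simp add: cong_mult_lcancel)
  then show "X = Y"
    using X Y Xc Yc by (intro eq_matI) (auto simp: residue_matrices_def cong_def)
qed

lemma exp_sum_mult_transpose:
  assumes M: "M > 0" and A: "A \<in> carrier_mat n n" and V: "V \<in> carrier_mat n n"
    and cop: "coprime (det V) M"
  shows "exp_sum n M (A * V\<^sup>T) = exp_sum n M A"
proof -
  let ?\<phi> = "\<lambda>X. mat_mod M (X * V)"
  let ?h = "\<lambda>X. if M dvd det X then add_char M (linform n A X) else 0"
  have "?\<phi> ` residue_matrices n M \<subseteq> residue_matrices n M"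
    using M V by (auto intro!: mat_mod_in_residue_matrices dest: residue_matrices_carrier)
  then have bij: "bij_betw ?\<phi> (residue_matrices n M) (residue_matrices n M)"
    using inj_on_mat_mod_mult[OF M V cop]
    by (simp add: bij_betw_def endo_inj_surj finite_residue_matrices)
  have h_\<phi>: "?h (?\<phi> X) = (if M dvd det X then add_char M (linform n (A * V\<^sup>T) X) else 0)"
    if X: "X \<in> residue_matrices n M" for X
  proof -
    have Xc: "X \<in> carrier_mat n n"
      using X by (simp add: residue_matrices_def)
    have "M dvd det (?\<phi> X) \<longleftrightarrow> M dvd det X * det V"
      using det_mat_mod[of "X * V" n M] Xc V by (simp add: mod_eq_0_iff_dvd [symmetric] det_mult)
    also have "\<dots> \<longleftrightarrow> M dvd det X"
      using cop by (simp add: coprime_commute coprime_dvd_mult_left_iff)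
    finally have "M dvd det (?\<phi> X) \<longleftrightarrow> M dvd det X" .
    moreover have "add_char M (linform n A (?\<phi> X)) = add_char M (linform n (A * V\<^sup>T) X)"
      using M linform_mat_mod[of "X * V" n A M] Xc V
      by (simp add: add_char_cong linform_mult[OF A Xc V])
    ultimately show ?thesis
      by simp
  qed
  have "exp_sum n M A = (\<Sum>X\<in>residue_matrices n M. ?h (?\<phi> X))"
    unfolding exp_sum_altdef by (rule sum.reindex_bij_betw[OF bij, symmetric])
  also have "\<dots> = exp_sum n M (A * V\<^sup>T)"
    unfolding exp_sum_altdef by (intro sum.cong refl) (rule h_\<phi>)
  finally show ?thesis ..
qed

definition last_col_op :: "nat \<Rightarrow> (nat \<Rightarrow> int) \<Rightarrow> int mat" where
  "last_col_op k t = mat (Suc k) (Suc k) (\<lambda>(i, j). if i = j then 1 else if i = k \<and> j < k then t j else 0)"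

lemma last_col_op_carrier: "last_col_op k t \<in> carrier_mat (Suc k) (Suc k)"
  by (simp add: last_col_op_def)

lemma det_last_col_op: "det (last_col_op k t) = 1"
proof -
  have "det (last_col_op k t) = prod_list (diag_mat (last_col_op k t))"
    by (rule det_lower_triangular[of "Suc k"]) (auto simp: last_col_op_def)
  also have "\<dots> = 1"
    by (simp add: prod_list_diag_prod last_col_op_def)
  finally show ?thesis .
qed

lemma mult_transpose_last_col_op:
  assumes A: "A \<in> carrier_mat (Suc k) (Suc k)" and i: "i < Suc k" and j: "j < Suc k"
  shows "(A * (last_col_op k t)\<^sup>T) $$ (i, j)
           = (if j = k then A $$ (i, k) + (\<Sum>l<k. t l * A $$ (i, l)) else A $$ (i, j))"
proof -
  have "(A * (last_col_op k t)\<^sup>T) $$ (i, j) = (\<Sum>l<Suc k. A $$ (i, l) * last_col_op k t $$ (j, l))"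
    using A i j by (simp add: last_col_op_def scalar_prod_def atLeast0LessThan)
  also have "\<dots> = (if j = k then A $$ (i, k) + (\<Sum>l<k. t l * A $$ (i, l)) else A $$ (i, j))"
  proof (cases "j = k")
    case True
    have "(\<Sum>l<k. A $$ (i, l) * last_col_op k t $$ (j, l)) = (\<Sum>l<k. t l * A $$ (i, l))"
      using True by (intro sum.cong) (auto simp: last_col_op_def)
    then show ?thesis
      using True by (simp add: lessThan_Suc last_col_op_def)
  next
    case False
    have "(\<Sum>l<Suc k. A $$ (i, l) * last_col_op k t $$ (j, l)) = (\<Sum>l<Suc k. if l = j then A $$ (i, j) else 0)"
      using False j by (intro sum.cong) (auto simp: last_col_op_def)
    then show ?thesis
      using False j by simp
  qed
  finally show ?thesis .
qed

section \<open>Bounding the exponential sum\<close>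

lemma linform_cols_mat_last:
  "linform (Suc k) A (cols_mat (Suc k) (g(k := a)))
     = (\<Sum>i<Suc k. \<Sum>j<k. A $$ (i, j) * g j i) + dot (Suc k) (\<lambda>i. A $$ (i, k)) a"
proof -
  have "(\<Sum>j<k. A $$ (i, j) * (g(k := a)) j i) = (\<Sum>j<k. A $$ (i, j) * g j i)" for i
    by (intro sum.cong) auto
  then show ?thesis
    by (simp add: linform_def dot_def lessThan_Suc sum.distrib)
qed

lemma exp_sum_split_last_col:
  "exp_sum (Suc k) M A
     = (\<Sum>g\<in>(\<Pi>\<^sub>E j\<in>{..<k}. residue_vecs (Suc k) M).
          add_char M (\<Sum>i<Suc k. \<Sum>j<k. A $$ (i, j) * g j i)
          * (\<Sum>a\<in>orth_vecs (Suc k) M (last_cofactors k g). add_char M (dot (Suc k) (\<lambda>i. A $$ (i, k)) a)))"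
  unfolding exp_sum_altdef sum_residue_matrices_Suc
proof (intro sum.cong refl)
  fix g :: "nat \<Rightarrow> nat \<Rightarrow> int"
  let ?\<Phi> = "\<Sum>i<Suc k. \<Sum>j<k. A $$ (i, j) * g j i"
  let ?w = "\<lambda>i. A $$ (i, k)"
  have "(\<Sum>a\<in>residue_vecs (Suc k) M. if M dvd det (cols_mat (Suc k) (g(k := a)))
          then add_char M (linform (Suc k) A (cols_mat (Suc k) (g(k := a)))) else 0)
      = (\<Sum>a\<in>residue_vecs (Suc k) M. if M dvd dot (Suc k) (last_cofactors k g) a
          then add_char M ?\<Phi> * add_char M (dot (Suc k) ?w a) else 0)"
    by (intro sum.cong refl)
       (simp only: det_cols_mat_last linform_cols_mat_last add_char_add)
  also have "\<dots> = add_char M ?\<Phi> * (\<Sum>a\<in>orth_vecs (Suc k) M (last_cofactors k g). add_char M (dot (Suc k) ?w a))"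
    unfolding orth_vecs_def sum.inter_filter[OF finite_residue_vecs] sum_distrib_left
    by (intro sum.cong refl) simp
  finally show "(\<Sum>a\<in>residue_vecs (Suc k) M. if M dvd det (cols_mat (Suc k) (g(k := a)))
          then add_char M (linform (Suc k) A (cols_mat (Suc k) (g(k := a)))) else 0)
      = add_char M ?\<Phi> * (\<Sum>a\<in>orth_vecs (Suc k) M (last_cofactors k g). add_char M (dot (Suc k) ?w a))" .
qed

lemma norm_char_sum_last_cofactors_le:
  assumes M: "M > 0" and g: "g \<in> (\<Pi>\<^sub>E j\<in>{..<k}. residue_vecs (Suc k) M)"
  shows "norm (\<Sum>a\<in>orth_vecs (Suc k) M (last_cofactors k g). add_char M (dot (Suc k) w a))
           \<le> (if \<forall>j<k. M dvd dot (Suc k) w (g j)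
               then of_int (M ^ k * Gcd (insert M (w ` {..<Suc k}))) else 0)"
proof (cases "\<forall>j<k. M dvd dot (Suc k) w (g j)")
  case True
  then show ?thesis
    using norm_char_sum_orth_vecs_le[OF M] by simp
next
  case False
  then obtain j where j: "j < k" and not_dvd: "\<not> M dvd dot (Suc k) w (g j)"
    by blast
  have "g j \<in> orth_vecs (Suc k) M (last_cofactors k g)"
    using g j last_cofactors_orth[OF j] by (auto simp: orth_vecs_def)
  then have "(\<Sum>a\<in>orth_vecs (Suc k) M (last_cofactors k g). add_char M (dot (Suc k) w a)) = 0"
    using char_sum_orth_vecs_nonzero_imp_dvd[OF M] not_dvd by blast
  then show ?thesis
    by (subst if_not_P[OF False]) simp
qed

lemma norm_exp_sum_le:
  assumes M: "M > 0"
  shows "norm (exp_sum (Suc k) M A)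
           \<le> of_int ((M ^ k * Gcd (insert M ((\<lambda>i. A $$ (i, k)) ` {..<Suc k}))) ^ Suc k)"
proof -
  let ?n = "Suc k"
  let ?w = "\<lambda>i. A $$ (i, k)"
  let ?P = "\<Pi>\<^sub>E j\<in>{..<k}. residue_vecs ?n M"
  define B where "B = M ^ k * Gcd (insert M (?w ` {..<?n}))"
  have B: "B \<ge> 0"
    using M by (simp add: B_def)
  have "{g \<in> ?P. \<forall>j<k. M dvd dot ?n ?w (g j)} = (\<Pi>\<^sub>E j\<in>{..<k}. orth_vecs ?n M ?w)"
    by (intro equalityI subsetI) (simp_all add: orth_vecs_def PiE_iff)
  then have card: "card {g \<in> ?P. \<forall>j<k. M dvd dot ?n ?w (g j)} = card (orth_vecs ?n M ?w) ^ k"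
    by (simp add: card_PiE)
  have "norm (exp_sum ?n M A)
      \<le> (\<Sum>g\<in>?P. norm (\<Sum>a\<in>orth_vecs ?n M (last_cofactors k g). add_char M (dot ?n ?w a)))"
    unfolding exp_sum_split_last_col by (rule order_trans[OF norm_sum]) (simp add: norm_mult)
  also have "\<dots> \<le> (\<Sum>g\<in>?P. if \<forall>j<k. M dvd dot ?n ?w (g j) then of_int B else 0)"
    unfolding B_def by (rule sum_mono) (rule norm_char_sum_last_cofactors_le[OF M])
  also have "\<dots> = of_int B * of_nat (card (orth_vecs ?n M ?w) ^ k)"
    by (simp add: sum.If_cases Int_def card [symmetric] finite_PiE mult.commute)
  also have "\<dots> \<le> of_int B * of_int B ^ k"
  proof -
    have "of_nat (card (orth_vecs ?n M ?w)) \<le> (of_int B :: real)"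
      using card_orth_vecs[OF M, of k ?w] unfolding B_def by (metis of_int_le_iff of_int_of_nat_eq)
    then show ?thesis
      using B by (simp add: mult_left_mono power_mono)
  qed
  also have "\<dots> = of_int (B ^ Suc k)"
    by simp
  finally show ?thesis
    by (simp add: B_def)
qed

section \<open>Choosing the column operation\<close>

definition last_comb :: "(nat \<Rightarrow> nat \<Rightarrow> int) \<Rightarrow> nat \<Rightarrow> (nat \<Rightarrow> int) \<Rightarrow> nat \<Rightarrow> int" where
  "last_comb v k t i = v k i + (\<Sum>j<k. t j * v j i)"

lemma last_comb_upd:
  assumes "j0 < k"
  shows "last_comb v k (t(j0 := t j0 + c)) i = last_comb v k t i + c * v j0 i"
proof -
  have "(\<Sum>j<k. (t(j0 := t j0 + c)) j * v j i) = (\<Sum>j<k. t j * v j i + (if j = j0 then c * v j i else 0))"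
    by (intro sum.cong) (auto simp: algebra_simps)
  then show ?thesis
    using assms by (simp add: last_comb_def sum.distrib)
qed

lemma dvd_last_comb_imp_ex_not_dvd:
  assumes dvd: "\<And>i. i \<in> I \<Longrightarrow> q dvd last_comb v k t i"
    and not_dvd: "\<exists>j\<le>k. \<exists>i\<in>I. \<not> q dvd v j i"
  shows "\<exists>j<k. \<exists>i\<in>I. \<not> q dvd v j i"
proof (rule ccontr)
  assume "\<not> (\<exists>j<k. \<exists>i\<in>I. \<not> q dvd v j i)"
  then have lower: "q dvd v j i" if "j < k" "i \<in> I" for j i
    using that by blast
  have "q dvd last_comb v k t i - (\<Sum>j<k. t j * v j i)" if "i \<in> I" for i
    using dvd[OF that] lower that by (intro dvd_diff dvd_sum) simp_all
  then have "q dvd v j i" if "j \<le> k" "i \<in> I" for j i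
    using that lower by (cases "j = k") (simp_all add: last_comb_def)
  then show False
    using not_dvd by blast
qed

lemma prime_not_dvd_prod_primes:
  fixes q :: int
  assumes "finite Q" and "prime q" and "q \<notin> Q" and "\<And>p. p \<in> Q \<Longrightarrow> prime p"
  shows "\<not> q dvd (\<Prod>p\<in>Q. p)"
proof
  assume "q dvd (\<Prod>p\<in>Q. p)"
  then obtain p where "p \<in> Q" "q dvd p"
    using prime_dvd_prod_iff[OF assms(1,2)] by auto
  then have "q = p"
    using assms(2,4) by (simp add: primes_dvd_imp_eq)
  then show False
    using \<open>p \<in> Q\<close> assms(3) by simp
qed

lemma prime_avoiding_last_comb:
  fixes v :: "nat \<Rightarrow> nat \<Rightarrow> int"
  assumes "finite Q" and "\<And>q. q \<in> Q \<Longrightarrow> prime q"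
    and "\<And>q. q \<in> Q \<Longrightarrow> \<exists>j\<le>k. \<exists>i\<in>I. \<not> q dvd v j i"
  shows "\<exists>t. \<forall>q\<in>Q. \<exists>i\<in>I. \<not> q dvd last_comb v k t i"
  using assms
proof (induction Q rule: finite_induct)
  case empty
  then show ?case
    by simp
next
  case (insert q Q)
  then obtain t where t: "\<forall>p\<in>Q. \<exists>i\<in>I. \<not> p dvd last_comb v k t i"
    by blast
  show ?case
  proof (cases "\<exists>i\<in>I. \<not> q dvd last_comb v k t i")
    case True
    then show ?thesis
      using t by blast
  next
    case False
    then have q_dvd: "q dvd last_comb v k t i" if "i \<in> I" for i
      using that by blast
    then obtain j0 i0 where j0: "j0 < k" and i0: "i0 \<in> I" and q_not_dvd: "\<not> q dvd v j0 i0"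
      using dvd_last_comb_imp_ex_not_dvd[OF _ insert.prems(2)[OF insertI1]] by blast
    \<comment> \<open>shifting \<open>t j0\<close> by a multiple of every prime in \<open>Q\<close> repairs \<open>q\<close> without spoiling \<open>Q\<close>\<close>
    define P where "P = (\<Prod>p\<in>Q. p)"
    define t' where "t' = t(j0 := t j0 + P)"
    have comb': "last_comb v k t' i = last_comb v k t i + P * v j0 i" for i
      unfolding t'_def using j0 by (rule last_comb_upd)
    have "\<not> q dvd P"
      unfolding P_def using insert.hyps insert.prems(1) by (intro prime_not_dvd_prod_primes) auto
    then have "\<not> q dvd last_comb v k t' i0"
      using insert.prems(1) q_not_dvd q_dvd[OF i0]
      by (simp add: comb' prime_dvd_mult_iff dvd_add_right_iff)
    moreover have "\<exists>i\<in>I. \<not> p dvd last_comb v k t' i" if "p \<in> Q" for p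
    proof -
      obtain i where "i \<in> I" "\<not> p dvd last_comb v k t i"
        using t \<open>p \<in> Q\<close> by blast
      moreover have "p dvd P"
        unfolding P_def using insert.hyps(1) \<open>p \<in> Q\<close> by (rule dvd_prodI)
      ultimately show ?thesis
        by (auto simp: comb' dvd_add_left_iff)
    qed
    ultimately show ?thesis
      using i0 by blast
  qed
qed

lemma Gcd_insert_eq_1:
  fixes K :: int
  assumes K: "K \<noteq> 0" and primes: "\<And>q. prime q \<Longrightarrow> q dvd K \<Longrightarrow> \<exists>x\<in>W. \<not> q dvd x"
  shows "Gcd (insert K W) = 1"
proof -
  have "is_unit (Gcd (insert K W))"
  proof (rule ccontr)
    assume "\<not> is_unit (Gcd (insert K W))"
    moreover have "Gcd (insert K W) \<noteq> 0"
      using K by simp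
    ultimately obtain q where q: "prime q" "q dvd Gcd (insert K W)"
      using prime_divisor_exists by blast
    then have "q dvd K" "\<forall>x\<in>W. q dvd x"
      by (auto intro: dvd_trans Gcd_dvd)
    then show False
      using primes[OF q(1)] by blast
  qed
  then show ?thesis
    by simp
qed

lemma exists_last_comb_coprime:
  fixes v :: "nat \<Rightarrow> nat \<Rightarrow> int" and K :: int
  assumes K: "K \<noteq> 0" and coprime: "Gcd (insert K {v j i | i j. i \<in> I \<and> j \<le> k}) = 1"
  shows "\<exists>t. Gcd (insert K (last_comb v k t ` I)) = 1"
proof -
  have "\<exists>j\<le>k. \<exists>i\<in>I. \<not> q dvd v j i" if q: "q \<in> prime_factors K" for q
  proof (rule ccontr)
    assume "\<not> (\<exists>j\<le>k. \<exists>i\<in>I. \<not> q dvd v j i)"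
    then have "q dvd Gcd (insert K {v j i | i j. i \<in> I \<and> j \<le> k})"
      using q by (intro Gcd_greatest) (auto simp: in_prime_factors_iff)
    then have "q dvd 1"
      by (simp only: coprime)
    then show False
      using q not_prime_unit by (auto simp: in_prime_factors_iff)
  qed
  then obtain t where t: "\<forall>q\<in>prime_factors K. \<exists>i\<in>I. \<not> q dvd last_comb v k t i"
    using prime_avoiding_last_comb[of "prime_factors K" k I v] by (auto simp: in_prime_factors_iff)
  have "Gcd (insert K (last_comb v k t ` I)) = 1"
    using K t by (intro Gcd_insert_eq_1) (auto simp: in_prime_factors_iff)
  then show ?thesis
    by blast
qed

lemma Gcd_insert_div_Gcd:
  fixes M :: int
  assumes M: "M > 0"
  shows "Gcd (insert (M div Gcd (insert M V)) ((\<lambda>x. x div Gcd (insert M V)) ` V)) = 1"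
proof -
  define G where "G = Gcd (insert M V)"
  define H where "H = Gcd (insert (M div G) ((\<lambda>x. x div G) ` V))"
  have G: "G > 0"
    using Gcd_insert_pos[OF M] by (simp add: G_def)
  have "(*) G ` insert (M div G) ((\<lambda>x. x div G) ` V) = insert M V"
  proof -
    have "G * (x div G) = x" if "x \<in> insert M V" for x
      unfolding G_def by (rule dvd_mult_div_cancel, rule Gcd_dvd) (rule that)
    then show ?thesis
      by (simp add: image_image)
  qed
  then have "G = normalize (G * H)"
    unfolding G_def H_def by (metis Gcd_mult)
  then have "G * H = G * 1"
    using G by (simp add: abs_mult H_def)
  then have "H = 1"
    using G by simp
  then show ?thesis
    by (simp only: H_def G_def)
qed

lemma exists_last_comb_Gcd:
  fixes v :: "nat \<Rightarrow> nat \<Rightarrow> int" and M :: int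
  assumes M: "M > 0"
  shows "\<exists>t. Gcd (insert M (last_comb v k t ` I)) = Gcd (insert M {v j i | i j. i \<in> I \<and> j \<le> k})"
proof -
  define G where "G = Gcd (insert M {v j i | i j. i \<in> I \<and> j \<le> k})"
  have G: "G > 0"
    using Gcd_insert_pos[OF M] by (simp add: G_def)
  define B where "B j i = v j i div G" for j i
  define K where "K = M div G"
  have v_eq: "v j i = G * B j i" if "i \<in> I" "j \<le> k" for i j
    unfolding B_def G_def by (rule dvd_mult_div_cancel [symmetric], rule Gcd_dvd) (use that in blast)
  have M_eq: "M = G * K"
    unfolding K_def G_def by (simp add: Gcd_dvd)
  have "{B j i | i j. i \<in> I \<and> j \<le> k} = (\<lambda>x. x div G) ` {v j i | i j. i \<in> I \<and> j \<le> k}"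
    by (auto simp: B_def)
  then have "Gcd (insert K {B j i | i j. i \<in> I \<and> j \<le> k}) = 1"
    using Gcd_insert_div_Gcd[OF M] by (simp add: K_def G_def)
  moreover have "K \<noteq> 0"
    using M M_eq by auto
  ultimately obtain t where gcd_1: "Gcd (insert K (last_comb B k t ` I)) = 1"
    using exists_last_comb_coprime by blast
  have "last_comb v k t i = G * last_comb B k t i" if "i \<in> I" for i
    using that by (simp add: last_comb_def v_eq sum_distrib_left algebra_simps)
  then have "insert M (last_comb v k t ` I) = (*) G ` insert K (last_comb B k t ` I)"
    using M_eq by (auto simp: image_image)
  then have "Gcd (insert M (last_comb v k t ` I)) = normalize (G * Gcd (insert K (last_comb B k t ` I)))"
    by (simp only: Gcd_mult)
  also have "\<dots> = G"
    unfolding gcd_1 using G by simp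
  finally show ?thesis
    unfolding G_def by blast
qed

lemma norm_exp_sum_le_gcd_form:
  assumes M: "M > 0" and A: "A \<in> carrier_mat (Suc k) (Suc k)"
  shows "norm (exp_sum (Suc k) M A) \<le> of_int ((M ^ k * gcd_form (Suc k) A M) ^ Suc k)"
proof -
  let ?v = "\<lambda>j i. A $$ (i, j)"
  have "Gcd (insert M {?v j i | i j. i \<in> {..<Suc k} \<and> j \<le> k}) = gcd_form (Suc k) A M"
    unfolding gcd_form_def by (simp add: less_Suc_eq_le)
  moreover obtain t where "Gcd (insert M (last_comb ?v k t ` {..<Suc k}))
      = Gcd (insert M {?v j i | i j. i \<in> {..<Suc k} \<and> j \<le> k})"
    using exists_last_comb_Gcd[OF M, of ?v k "{..<Suc k}"] by blast
  ultimately have t: "Gcd (insert M (last_comb ?v k t ` {..<Suc k})) = gcd_form (Suc k) A M"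
    by simp
  define A' where "A' = A * (last_col_op k t)\<^sup>T"
  have "exp_sum (Suc k) M A' = exp_sum (Suc k) M A"
    unfolding A'_def using M A last_col_op_carrier
    by (intro exp_sum_mult_transpose) (simp_all add: det_last_col_op)
  moreover have "(\<lambda>i. A' $$ (i, k)) ` {..<Suc k} = last_comb ?v k t ` {..<Suc k}"
    using A by (intro image_cong refl) (simp add: A'_def mult_transpose_last_col_op last_comb_def)
  ultimately show ?thesis
    using norm_exp_sum_le[OF M, of k A'] t by simp
qed

lemma squarefree_dvd_square_imp_dvd:
  fixes e d :: nat
  assumes sq: "squarefree e" and dvd: "e dvd d ^ 2"
  shows "e dvd d"
proof -
  define g where "g = gcd e d"
  have "g dvd e"
    by (simp add: g_def)
  then obtain u where e: "e = g * u"
    by (rule dvdE)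
  have "e dvd gcd (e ^ 2) (d ^ 2)"
    by (rule gcd_greatest[OF _ dvd]) simp
  also have "gcd (e ^ 2) (d ^ 2) = g * g"
    unfolding g_def gcd_exp by (simp add: power2_eq_square)
  finally have "g * u dvd g * g"
    by (simp only: e)
  moreover have "e \<noteq> 0"
    using sq by (rule contrapos_pn) simp
  then have "g \<noteq> 0"
    by (simp add: g_def)
  ultimately have "u dvd g"
    by simp
  then have "u ^ 2 dvd e"
    unfolding e power2_eq_square by (rule mult_dvd_mono) simp
  then have "u = 1"
    using squarefreeD[OF sq] by simp
  then have "e = g"
    by (simp add: e)
  moreover have "g dvd d"
    by (simp add: g_def)
  ultimately show ?thesis
    by simp
qed

lemma squarefree_coprime_mult_dvd:
  fixes d e f :: nat
  assumes "squarefree e" and "squarefree f" and "coprime e f" and dvd: "e * f ^ 2 dvd d ^ 2"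
  shows "e * f dvd d"
proof -
  have "e dvd d ^ 2"
    using dvd_trans[OF dvd_triv_left dvd] .
  moreover have "f dvd e * f ^ 2"
    by (simp add: power2_eq_square)
  then have "f dvd d ^ 2"
    using dvd by (rule dvd_trans)
  ultimately show ?thesis
    using assms(1-3) by (intro divides_mult) (simp_all add: squarefree_dvd_square_imp_dvd)
qed

lemma mult_le_of_gcd_form_eq:
  fixes d e f :: nat
  assumes d: "d \<ge> 1" and "squarefree e" and "squarefree f" and "coprime e f"
    and G: "gcd_form n A (int d ^ 2) = int (e * f ^ 2)"
  shows "e * f \<le> d"
proof -
  have "int (e * f ^ 2) dvd int d ^ 2"
    unfolding G [symmetric] gcd_form_def by (rule Gcd_dvd) simp
  then have "e * f ^ 2 dvd d ^ 2"
    by (simp only: of_nat_power [symmetric] int_dvd_int_iff)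
  then have "e * f dvd d"
    using assms(2-4) squarefree_coprime_mult_dvd by blast
  then show ?thesis
    using d by (simp add: dvd_imp_le)
qed

lemma powr_mult_powr_le:
  fixes D E F a b :: real
  assumes E: "E \<ge> 1" and F: "F > 0" and EF: "E * F \<le> D" and a: "0 \<le> a" and ab: "a \<le> b"
  shows "E powr a * F powr b \<le> D powr b"
proof -
  have "E powr a * F powr b \<le> E powr b * F powr b"
    using E F ab by (intro mult_right_mono powr_mono) simp_all
  also have "\<dots> = (E * F) powr b"
    using E F by (simp add: powr_mult)
  also have "\<dots> \<le> D powr b"
    using EF E F a ab by (intro powr_mono2) simp_all
  finally show ?thesis .
qed

lemma power_le_powr_bound:
  fixes D E F :: real and n :: nat
  assumes D: "D \<ge> 1" and E: "E \<ge> 1" and F: "F \<ge> 1" and EF: "E * F \<le> D" and n: "n \<ge> 1"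
  shows "(D ^ (2 * (n - 1)) * E * F ^ 2) ^ n
           \<le> D powr (2 * real n ^ 2 - (real n + 3) / 2) * E * F powr ((real n + 3) / 2)"
proof -
  define a where "a = real n - 1"
  have a: "a \<ge> 0"
    using n by (simp add: a_def)
  have D0: "D > 0" and E0: "E > 0" and F0: "F > 0"
    using D E F by auto
  have "(D ^ (2 * (n - 1)) * E * F ^ 2) ^ n = D ^ (2 * (n - 1) * n) * E ^ n * F ^ (2 * n)"
    by (simp add: power_mult_distrib power_mult [symmetric] mult.commute)
  also have "\<dots> = D powr (2 * a * real n) * E powr (a + 1) * F powr (3 * a / 2 + (real n + 3) / 2)"
  proof -
    have "D ^ (2 * (n - 1) * n) = D powr real (2 * (n - 1) * n)"
      by (rule powr_realpow [OF D0, symmetric])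
    also have "real (2 * (n - 1) * n) = 2 * a * real n"
      using n by (simp add: a_def of_nat_diff)
    finally have D_pow: "D ^ (2 * (n - 1) * n) = D powr (2 * a * real n)" .
    have "E ^ n = E powr real n"
      by (rule powr_realpow [OF E0, symmetric])
    then have E_pow: "E ^ n = E powr (a + 1)"
      by (simp add: a_def)
    have "F ^ (2 * n) = F powr real (2 * n)"
      by (rule powr_realpow [OF F0, symmetric])
    also have "real (2 * n) = 3 * a / 2 + (real n + 3) / 2"
      by (simp add: a_def field_simps)
    finally have F_pow: "F ^ (2 * n) = F powr (3 * a / 2 + (real n + 3) / 2)" .
    show ?thesis
      by (simp only: D_pow E_pow F_pow)
  qed
  also have "\<dots> = D powr (2 * a * real n) * (E powr a * F powr (3 * a / 2)) * E * F powr ((real n + 3) / 2)"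
    using E0 by (simp add: powr_add algebra_simps)
  also have "\<dots> \<le> D powr (2 * a * real n) * D powr (3 * a / 2) * E * F powr ((real n + 3) / 2)"
    using powr_mult_powr_le[OF E F0 EF a, of "3 * a / 2"] E0 F0 D0 a
    by (simp add: mult_left_mono mult_right_mono mult.assoc)
  also have "D powr (2 * a * real n) * D powr (3 * a / 2) = D powr (2 * real n ^ 2 - (real n + 3) / 2)"
  proof -
    have "2 * a * real n + 3 * a / 2 = 2 * real n ^ 2 - (real n + 3) / 2"
      by (simp add: a_def field_simps power2_eq_square)
    then show ?thesis
      by (simp add: powr_add [symmetric])
  qed
  finally show ?thesis .
qed

theorem lemma3p8:
  fixes n :: nat
  assumes "n \<ge> 1"
  shows "\<exists>g :: nat \<Rightarrow> real. (g \<longlonglongrightarrow> 0) \<and>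
    (\<forall>d (A :: int mat) (e :: nat) (f :: nat).
       d \<ge> 1 \<longrightarrow> squarefree d \<longrightarrow> A \<in> carrier_mat n n \<longrightarrow>
       e > 0 \<longrightarrow> f > 0 \<longrightarrow> squarefree e \<longrightarrow> squarefree f \<longrightarrow> coprime e f \<longrightarrow>
       gcd_form n A (int d ^ 2) = int (e * f ^ 2) \<longrightarrow>
       norm (S_sum n d A) \<le>
         real d powr (2 * real n ^ 2 - (real n + 3) / 2 + g d) * real e
           * real f powr ((real n + 3) / 2))"
proof (intro exI[of _ "\<lambda>_. 0"] conjI allI impI)
  obtain k where n: "n = Suc k"
    using assms by (cases n) auto
  fix d :: nat and A :: "int mat" and e f :: nat
  \<comment> \<open>the argument does not need \<open>d\<close> to be squarefree\<close>
  assume d: "d \<ge> 1" and A: "A \<in> carrier_mat n n" and "e > 0" "f > 0"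
    and "squarefree e" "squarefree f" "coprime e f" and G: "gcd_form n A (int d ^ 2) = int (e * f ^ 2)"
  have "e * f \<le> d"
    using mult_le_of_gcd_form_eq d \<open>squarefree e\<close> \<open>squarefree f\<close> \<open>coprime e f\<close> G by blast
  then have ef: "real e * real f \<le> real d"
    by (simp flip: of_nat_mult)
  have "norm (S_sum n d A) \<le> of_int ((int d ^ 2) ^ k * int (e * f ^ 2)) ^ n"
    using norm_exp_sum_le_gcd_form[where M = "int d ^ 2" and k = k and A = A] d A G
    by (simp add: S_sum_eq_exp_sum n)
  also have "\<dots> = (real d ^ (2 * (n - 1)) * real e * real f ^ 2) ^ n"
    by (simp add: n power_mult mult.assoc)
  also have "\<dots> \<le> real d powr (2 * real n ^ 2 - (real n + 3) / 2) * real e * real f powr ((real n + 3) / 2)"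
    by (rule power_le_powr_bound) (use ef d \<open>e > 0\<close> \<open>f > 0\<close> assms in simp_all)
  finally show "norm (S_sum n d A) \<le> real d powr (2 * real n ^ 2 - (real n + 3) / 2 + 0) * real e
      * real f powr ((real n + 3) / 2)"
    by simp
qed simp

end
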